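(* Let $I=(i_1,\dots,i_k)$ and $J=(j_1,\dots,j_l)$ be compositions of $n$. Then the coefficient $C_I^J(q)$ of $\Psi_I$ in $S^J(q)$ is given by the following rule: (i) if $i_1<j_1$, then $C_I^J(q)=C_{(i_1+i_2,i_3,\dots,i_k)}^J(q)$; (ii) otherwise, \[ C_I^J(q) = \left[\begin{matrix} k+j_1-1\\ j_1\end{matrix}\right]_q C_{I'}^{(j_2,\dots,j_l)}(q), \] where the (ribbon) diagram of $I'$ is obtained by removing the first $j_1$ cells of the diagram of $I$.
   Context: $\mathbf{Sym}$ is the algebra of noncommutative symmetric functions, with complete functions $S_n$ and Tevlin's noncommutative monomial basis $\Psi_I$. $\mathbf{WQSym}$ has basis $\mathbf{M}_u$ indexed by packed words $u$. For a packed word $u$, a special inversion is a pair $i<j$ with $u_i>u_j$ such that $u_j$ is the rightmost occurrence of its letter in $u$; $\mathrm{sinv}(u)$ is their number. The $q$-product $\star_q$ on $\mathbf{WQSym}$ is defined by requiring that the elements $\mathbf{M}'_u=q^{\mathrm{sinv}(u)}\mathbf{M}_u$ multiply (under $\star_q$) exactly as the $\mathbf{M}_u$ multiply under the usual product. The W-composition $\mathrm{WC}(u)$ of a packed word $u$ is the composition whose descent set is the set of positions of the last occurrences of each letter in $u$; the map $\zeta:\mathbf{M}_u\mapsto\Psi_{\mathrm{WC}(u)}$ is an algebra morphism from $\mathbf{WQSym}$ onto $\mathbf{Sym}$. Let $\alpha(S_n)=\sum_u \mathbf{M}_u$ over nondecreasing packed words $u$ of length $n$. For a composition $J=(j_1,\dots,j_r)$,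 $S^J(q)=\zeta(\alpha(S_{j_1})\star_q\cdots\star_q\alpha(S_{j_r}))$, and $C_I^J(q)$ denotes the coefficient of $\Psi_I$ in $S^J(q)$. $\left[\begin{matrix} a\\ b\end{matrix}\right]_q$ denotes the Gaussian $q$-binomial coefficient. *)

theory Defs
  imports Main
begin

definition packed :: "nat list \<Rightarrow> bool" where
  "packed u \<longleftrightarrow> (\<exists>m. set u = {1..m})"

definition pack :: "nat list \<Rightarrow> nat list" where
  "pack w = map (\<lambda>x. card {y \<in> set w. y \<le> x}) w"

definition sinv :: "nat list \<Rightarrow> nat" where
  "sinv u = card {(i, j). i < j \<and> j < length u \<and> u ! i > u ! j
                          \<and> u ! j \<notin> set (drop (Suc j) u)}"

definition compositions :: "nat \<Rightarrow> nat list set" where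
  "compositions n = {I. (\<forall>x\<in>set I. 0 < x) \<and> sum_list I = n}"

text \<open>The composition of n = max D whose descent set (together with n) is D,
for a finite set D of positive integers.\<close>
definition comp_of_set :: "nat set \<Rightarrow> nat list" where
  "comp_of_set D = (let ds = sorted_list_of_set D
                    in map (\<lambda>(a, b). a - b) (zip ds (0 # ds)))"

definition last_occ :: "nat list \<Rightarrow> nat set" where
  "last_occ u = {i \<in> {1..length u}. u ! (i - 1) \<notin> set (drop i u)}"

definition WC :: "nat list \<Rightarrow> nat list" where
  "WC u = comp_of_set (last_occ u)"

text \<open>Remove the first m cells of the ribbon diagram of a composition
(cells read row by row).\<close>
fun remove_cells :: "nat \<Rightarrow> nat list \<Rightarrow> nat list" where
  "remove_cells 0 I = I"
| "remove_cells (Suc m) [] = []"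
| "remove_cells (Suc m) (i # I) =
     (if Suc m < i then (i - Suc m) # I else remove_cells (Suc m - i) I)"

text \<open>An element of WQSym (with coefficients in a field) is represented by its
coefficient function on words, u \<mapsto> coefficient of M_u (supported on packed words).\<close>
type_synonym 'a wqsym = "nat list \<Rightarrow> 'a"

text \<open>Usual product: M_u M_v = sum of M_w over packed w with pack(w[1..|u|]) = u and
pack(w[|u|+1..]) = v. The q-product is defined by M'_u \<star>_q M'_v = sum M'_w with
M'_u = q^sinv(u) M_u, i.e.
M_u \<star>_q M_v = sum_w q^(sinv w - sinv u - sinv v) M_w.
Below is the coefficient of M_w in the bilinear extension f \<star>_q g.\<close>
definition qprod :: "'a::field \<Rightarrow> 'a wqsym \<Rightarrow> 'a wqsym \<Rightarrow> 'a wqsym" where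
  "qprod q f g = (\<lambda>w. if packed w then
      (\<Sum>k\<le>length w. f (pack (take k w)) * g (pack (drop k w)) *
          q powi (int (sinv w) - int (sinv (pack (take k w))) - int (sinv (pack (drop k w)))))
     else 0)"

definition wq_one :: "'a::field wqsym" where
  "wq_one = (\<lambda>w. if w = [] then 1 else 0)"

definition alphaS :: "nat \<Rightarrow> 'a::field wqsym" where
  "alphaS n = (\<lambda>u. if packed u \<and> length u = n \<and> sorted u then 1 else 0)"

text \<open>alpha(S_{j1}) \<star>_q ... \<star>_q alpha(S_{jr}) (the q-product is associative).\<close>
fun Sprod :: "'a::field \<Rightarrow> nat list \<Rightarrow> 'a wqsym" where
  "Sprod q [] = wq_one"
| "Sprod q (j # J) = qprod q (alphaS j) (Sprod q J)"

text \<open>Elements of Sym are represented by their coefficient function in the basis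
Psi_I. zeta(M_u) = Psi_(WC u), extended linearly.\<close>
definition zeta :: "'a::field wqsym \<Rightarrow> (nat list \<Rightarrow> 'a)" where
  "zeta f = (\<lambda>I. \<Sum>u\<in>{u. packed u \<and> length u = sum_list I \<and> WC u = I}. f u)"

definition SJ :: "'a::field \<Rightarrow> nat list \<Rightarrow> (nat list \<Rightarrow> 'a)" where
  "SJ q J = zeta (Sprod q J)"

definition CIJ :: "'a::field \<Rightarrow> nat list \<Rightarrow> nat list \<Rightarrow> 'a" where
  "CIJ q I J = SJ q J I"

fun qbinom :: "'a::field \<Rightarrow> nat \<Rightarrow> nat \<Rightarrow> 'a" where
  "qbinom q n 0 = 1"
| "qbinom q 0 (Suc k) = 0"
| "qbinom q (Suc n) (Suc k) = qbinom q n k + q ^ Suc k * qbinom q n (Suc k)"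

end

theory Submission
  imports Defs "HOL-Library.Product_Lexorder"
begin

text \<open>Expanding the q-product, the coefficient of M_u in alpha(S_j) *_q S^(J') vanishes unless the
  first j letters of u are nondecreasing, and then equals q^(r_1 + ... + r_j) times the
  coefficient of M_pack(suffix) in S^(J'), where r_i counts the suffix letters smaller than u_i.
  Among the words with W-composition I, nondecreasing prefix of length j and a fixed packed
  suffix v, the ranks (r_1, ..., r_j) range bijectively over the nondecreasing sequences with
  entries below N, the number of distinct letters of v plus one if j is a descent of I; their
  generating function is the Gaussian binomial [N + j - 1, j]_q. If j <= i_1 then N = k for
  every v, and the sum over v is the coefficient for the composition with the shifted descent
  set, i.e. with the first j cells removed. If i_1 < j, the descent i_1 is invisible in this
  expansion, which gives (i).\<close>

section \<open>Last occurrences\<close>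

lemma in_set_drop_iff_nth:
  "x \<in> set (drop n u) \<longleftrightarrow> (\<exists>k. n \<le> k \<and> k < length u \<and> u ! k = x)"
proof
  assume "x \<in> set (drop n u)"
  then obtain i where "i < length (drop n u)" "drop n u ! i = x"
    by (auto simp: in_set_conv_nth)
  then show "\<exists>k. n \<le> k \<and> k < length u \<and> u ! k = x"
    by (intro exI[of _ "n + i"]) auto
next
  assume "\<exists>k. n \<le> k \<and> k < length u \<and> u ! k = x"
  then obtain k where "n \<le> k" "k < length u" "u ! k = x" by auto
  then have "drop n u ! (k - n) = x" "k - n < length (drop n u)" by auto
  then show "x \<in> set (drop n u)" by (metis nth_mem)
qed

definition last_positions :: "'a list \<Rightarrow> nat set" where
  "last_positions u = {i. i < length u \<and> u ! i \<notin> set (drop (Suc i) u)}"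

lemma last_positions_iff:
  "i \<in> last_positions u \<longleftrightarrow> i < length u \<and> (\<forall>k. i < k \<and> k < length u \<longrightarrow> u ! k \<noteq> u ! i)"
  unfolding last_positions_def in_set_drop_iff_nth by auto

lemma last_positions_less_length: "i \<in> last_positions u \<Longrightarrow> i < length u"
  by (simp add: last_positions_def)

lemma last_occ_eq_Suc_last_positions: "last_occ u = Suc ` last_positions u"
proof (rule set_eqI)
  fix i show "i \<in> last_occ u \<longleftrightarrow> i \<in> Suc ` last_positions u"
    by (cases i) (auto simp: last_occ_def last_positions_def)
qed

lemma last_positions_inj:
  assumes "i \<in> last_positions u" "k \<in> last_positions u" "u ! i = u ! k"
  shows "i = k"
  using assms unfolding last_positions_iff by (metis linorder_neq_iff)

lemma last_position_exists:
  assumes "i < length u"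
  obtains e where "i \<le> e" "e \<in> last_positions u" "u ! e = u ! i"
proof -
  define K where "K = {k. k < length u \<and> u ! k = u ! i}"
  have "finite K" "i \<in> K" using assms by (auto simp: K_def)
  then have "Max K \<in> K" "i \<le> Max K" by (auto intro: Max_in)
  moreover have "Max K \<in> last_positions u"
    unfolding last_positions_iff
  proof (intro conjI allI impI)
    show "Max K < length u" using \<open>Max K \<in> K\<close> by (simp add: K_def)
    fix k assume k: "Max K < k \<and> k < length u"
    show "u ! k \<noteq> u ! Max K"
    proof
      assume "u ! k = u ! Max K"
      then have "k \<in> K" using k \<open>Max K \<in> K\<close> by (simp add: K_def)
      then show False using Max_ge[OF \<open>finite K\<close>] k by fastforce
    qed
  qed
  ultimately show ?thesis using that by (simp add: K_def)
qed

lemma bij_betw_nth_last_positions: "bij_betw (nth u) (last_positions u) (set u)"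
proof (rule bij_betw_imageI)
  show "inj_on (nth u) (last_positions u)"
    by (meson inj_onI last_positions_inj)
  show "nth u ` last_positions u = set u"
  proof
    show "nth u ` last_positions u \<subseteq> set u"
      by (auto simp: last_positions_def)
    show "set u \<subseteq> nth u ` last_positions u"
      by (metis image_eqI in_set_conv_nth last_position_exists subsetI)
  qed
qed

lemma card_set_eq_card_last_positions:
  "card {y \<in> set u. P y} = card {k \<in> last_positions u. P (u ! k)}"
proof -
  have "bij_betw (nth u) {k \<in> last_positions u. P (u ! k)} {y \<in> set u. P y}"
    using bij_betw_nth_last_positions[of u] unfolding bij_betw_def inj_on_def by auto
  then show ?thesis by (simp add: bij_betw_same_card)
qed

lemma card_last_positions: "card (last_positions u) = card (set u)"
  using card_set_eq_card_last_positions[of u "\<lambda>_. True"] by simp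

lemma last_positions_drop: "last_positions (drop j u) = {i. i + j \<in> last_positions u}"
proof (rule set_eqI)
  fix i
  have "(\<forall>k. i < k \<and> k < length u - j \<longrightarrow> u ! (j + k) \<noteq> u ! (j + i))
      \<longleftrightarrow> (\<forall>k. i + j < k \<and> k < length u \<longrightarrow> u ! k \<noteq> u ! (i + j))"
  proof (intro iffI allI impI)
    fix k assume H: "\<forall>k. i < k \<and> k < length u - j \<longrightarrow> u ! (j + k) \<noteq> u ! (j + i)"
      and k: "i + j < k \<and> k < length u"
    then have "j + (k - j) = k" "i < k - j" "k - j < length u - j" by auto
    then show "u ! k \<noteq> u ! (i + j)" using H by (metis add.commute)
  next
    fix k assume H: "\<forall>k. i + j < k \<and> k < length u \<longrightarrow> u ! k \<noteq> u ! (i + j)"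
      and k: "i < k \<and> k < length u - j"
    then have "i + j < j + k" "j + k < length u" by auto
    then show "u ! (j + k) \<noteq> u ! (j + i)" using H by (metis add.commute)
  qed
  then show "i \<in> last_positions (drop j u) \<longleftrightarrow> i \<in> {i. i + j \<in> last_positions u}"
    unfolding last_positions_iff by auto
qed

section \<open>Order patterns and standardization\<close>

definition same_pattern :: "'a::linorder list \<Rightarrow> 'b::linorder list \<Rightarrow> bool" where
  "same_pattern u w \<longleftrightarrow> length u = length w \<and>
     (\<forall>a < length u. \<forall>b < length u. u ! a < u ! b \<longleftrightarrow> w ! a < w ! b)"

lemma same_pattern_length: "same_pattern u w \<Longrightarrow> length u = length w"
  by (simp add: same_pattern_def)

lemma same_pattern_less_iff:
  "same_pattern u w \<Longrightarrow> a < length u \<Longrightarrow> b < length u \<Longrightarrow> u ! a < u ! b \<longleftrightarrow> w ! a < w ! b"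
  by (simp add: same_pattern_def)

lemma same_pattern_le_iff:
  "same_pattern u w \<Longrightarrow> a < length u \<Longrightarrow> b < length u \<Longrightarrow> u ! a \<le> u ! b \<longleftrightarrow> w ! a \<le> w ! b"
  using same_pattern_less_iff[of u w b a] by (simp add: not_less[symmetric])

lemma same_pattern_eq_iff:
  "same_pattern u w \<Longrightarrow> a < length u \<Longrightarrow> b < length u \<Longrightarrow> u ! a = u ! b \<longleftrightarrow> w ! a = w ! b"
  using same_pattern_le_iff[of u w a b] same_pattern_le_iff[of u w b a] by (simp add: eq_iff)

lemma same_pattern_take: "same_pattern u w \<Longrightarrow> same_pattern (take j u) (take j w)"
  unfolding same_pattern_def by auto

lemma same_pattern_drop: "same_pattern u w \<Longrightarrow> same_pattern (drop j u) (drop j w)"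
  unfolding same_pattern_def by auto

lemma same_pattern_map:
  assumes "strict_mono_on (set u) f"
  shows "same_pattern (map f u) u"
  unfolding same_pattern_def using strict_mono_on_less[OF assms] by simp

lemma same_pattern_sorted_iff:
  assumes "same_pattern u w"
  shows "sorted u \<longleftrightarrow> sorted w"
  using same_pattern_le_iff[OF assms] same_pattern_length[OF assms]
  unfolding sorted_iff_nth_mono by (metis le_less_trans)

lemma same_pattern_last_positions:
  assumes "same_pattern u w"
  shows "last_positions u = last_positions w"
  using same_pattern_eq_iff[OF assms] same_pattern_length[OF assms]
  by (auto simp: last_positions_iff)

lemma same_pattern_card_set_less:
  assumes "same_pattern u w" "i < length u"
  shows "card {y \<in> set (drop j u). y < u ! i} = card {y \<in> set (drop j w). y < w ! i}"
proof -
  have "last_positions (drop j u) = last_positions (drop j w)"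
    using same_pattern_last_positions[OF same_pattern_drop[OF assms(1)]] .
  moreover have "drop j u ! k < u ! i \<longleftrightarrow> drop j w ! k < w ! i"
    if "k \<in> last_positions (drop j u)" for k
  proof -
    have "j + k < length u" using last_positions_less_length[OF that] by simp
    then show ?thesis
      using assms same_pattern_less_iff[OF assms(1), of "j + k" i] same_pattern_length[OF assms(1)]
      by simp
  qed
  ultimately show ?thesis
    unfolding card_set_eq_card_last_positions by (metis (no_types, lifting) Collect_cong)
qed

definition standardize :: "'a::linorder list \<Rightarrow> nat list" where
  "standardize w = map (\<lambda>x. card {y \<in> set w. y \<le> x}) w"

lemma pack_eq_standardize: "pack = standardize"
  by (simp add: fun_eq_iff pack_def standardize_def)

lemma length_standardize [simp]: "length (standardize w) = length w"
  by (simp add: standardize_def)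

lemma strict_mono_on_card_le:
  fixes V :: "'a::linorder set"
  assumes "finite V"
  shows "strict_mono_on V (\<lambda>x. card {y \<in> V. y \<le> x})"
proof (rule strict_mono_onI)
  fix x y assume "x \<in> V" "y \<in> V" "x < y"
  then have "y \<in> {z \<in> V. z \<le> y}" "y \<notin> {z \<in> V. z \<le> x}" "{z \<in> V. z \<le> x} \<subseteq> {z \<in> V. z \<le> y}"
    by auto
  then show "card {z \<in> V. z \<le> x} < card {z \<in> V. z \<le> y}"
    using assms by (intro psubset_card_mono) auto
qed

lemma same_pattern_standardize: "same_pattern (standardize w) w"
  unfolding standardize_def by (rule same_pattern_map[OF strict_mono_on_card_le]) simp

lemma standardize_eq_if_same_pattern:
  assumes "same_pattern u w"
  shows "standardize u = standardize w"
proof (rule nth_equalityI)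
  show "length (standardize u) = length (standardize w)"
    using same_pattern_length[OF assms] by simp
  fix a assume "a < length (standardize u)"
  then have a: "a < length u" by simp
  have "card {y \<in> set u. y \<le> u ! a} = card {k \<in> last_positions u. u ! k \<le> u ! a}"
    by (rule card_set_eq_card_last_positions)
  also have "\<dots> = card {k \<in> last_positions w. w ! k \<le> w ! a}"
    using same_pattern_le_iff[OF assms _ a] same_pattern_last_positions[OF assms]
    by (metis (no_types, lifting) Collect_cong last_positions_less_length)
  also have "\<dots> = card {y \<in> set w. y \<le> w ! a}"
    by (rule card_set_eq_card_last_positions[symmetric])
  finally show "standardize u ! a = standardize w ! a"
    using a same_pattern_length[OF assms] by (simp add: standardize_def)
qed

lemma packed_standardize: "packed (standardize w)"
proof -
  define f where "f = (\<lambda>x. card {y \<in> set w. y \<le> x})"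
  have inj: "inj_on f (set w)"
    unfolding f_def by (rule strict_mono_on_imp_inj_on[OF strict_mono_on_card_le]) simp
  have "f ` set w \<subseteq> {1..card (set w)}"
    by (auto simp: f_def Suc_le_eq card_gt_0_iff intro: card_mono)
  moreover have "card (f ` set w) = card (set w)"
    using card_image[OF inj] .
  ultimately have "f ` set w = {1..card (set w)}"
    by (simp add: card_subset_eq)
  then show ?thesis
    unfolding packed_def standardize_def f_def by auto
qed

lemma standardize_packed:
  assumes "packed u"
  shows "standardize u = u"
proof -
  obtain m where m: "set u = {1..m}" using assms packed_def by auto
  have "card {y \<in> set u. y \<le> x} = x" if "x \<in> set u" for x
  proof -
    have "{y \<in> set u. y \<le> x} = {1..x}" using that m by auto
    then show ?thesis by simp
  qed
  then show ?thesis
    unfolding standardize_def by (intro map_idI) blast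
qed

lemma card_set_standardize: "card (set (standardize w)) = card (set w)"
  by (metis card_last_positions same_pattern_last_positions same_pattern_standardize)

lemma packed_eq_atLeastAtMost: "packed u \<Longrightarrow> set u = {1..card (set u)}"
  unfolding packed_def by (metis card_atLeastAtMost diff_Suc_1)

lemma finite_packed_length: "finite {u. packed u \<and> length u = L}"
proof (rule finite_subset)
  show "{u. packed u \<and> length u = L} \<subseteq> {u. set u \<subseteq> {..L} \<and> length u = L}"
  proof
    fix u assume u: "u \<in> {u. packed u \<and> length u = L}"
    have "x \<le> L" if "x \<in> set u" for x
    proof -
      have "x \<in> {1..card (set u)}" using that u packed_eq_atLeastAtMost by blast
      then show ?thesis using u card_length[of u] by auto
    qed
    then show "u \<in> {u. set u \<subseteq> {..L} \<and> length u = L}" using u by auto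
  qed
qed (simp add: finite_lists_length_eq)

section \<open>Special inversions\<close>

lemma sinv_eq_card_last_positions:
  "sinv u = card {(i, j). i < j \<and> j \<in> last_positions u \<and> u ! i > u ! j}"
  unfolding sinv_def last_positions_def by (rule arg_cong[where f = card]) auto

lemma sinv_Cons: "sinv (x # u) = sinv u + card {y \<in> set u. y < x}"
proof -
  define S where "S u = {(i, j). i < j \<and> j \<in> last_positions u \<and> u ! i > u ! j}" for u :: "nat list"
  have last_Cons: "Suc k \<in> last_positions (x # u) \<longleftrightarrow> k \<in> last_positions u" for k
    by (simp add: last_positions_def)
  have split: "S (x # u) = (\<lambda>k. (0, Suc k)) ` {k \<in> last_positions u. u ! k < x}
                         \<union> (\<lambda>(i, k). (Suc i, Suc k)) ` S u"
  proof (rule set_eqI)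
    fix p :: "nat \<times> nat"
    obtain i k where p: "p = (i, k)" by (cases p)
    show "p \<in> S (x # u) \<longleftrightarrow> p \<in> (\<lambda>k. (0, Suc k)) ` {k \<in> last_positions u. u ! k < x}
                         \<union> (\<lambda>(i, k). (Suc i, Suc k)) ` S u"
      unfolding p S_def by (cases k; cases i) (auto simp: last_Cons)
  qed
  have fin: "finite (S u)"
    by (rule finite_subset[of _ "{..<length u} \<times> {..<length u}"])
      (auto simp: S_def last_positions_def)
  have fin_last: "finite (last_positions u)"
    by (rule finite_subset[of _ "{..<length u}"]) (auto dest: last_positions_less_length)
  have "inj_on (\<lambda>(i, k). (Suc i, Suc k)) (S u)" "inj_on (\<lambda>k. (0::nat, Suc k)) A" for A
    by (auto simp: inj_on_def)
  then have "card (S (x # u)) = card {k \<in> last_positions u. u ! k < x} + card (S u)"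
    unfolding split
    by (subst card_Un_disjoint) (auto simp: fin fin_last card_image)
  then show ?thesis
    by (simp add: S_def sinv_eq_card_last_positions card_set_eq_card_last_positions)
qed

lemma same_pattern_sinv:
  assumes "same_pattern u w"
  shows "sinv u = sinv w"
proof -
  have "u ! b < u ! a \<longleftrightarrow> w ! b < w ! a" if "a < b" "b \<in> last_positions u" for a b
    using same_pattern_less_iff[OF assms, of b a] last_positions_less_length[OF that(2)] that(1)
    by simp
  then have "{(i, j). i < j \<and> j \<in> last_positions u \<and> u ! i > u ! j}
      = {(i, j). i < j \<and> j \<in> last_positions w \<and> w ! i > w ! j}"
    using same_pattern_last_positions[OF assms] by auto
  then show ?thesis
    by (simp add: sinv_eq_card_last_positions)
qed

lemma sinv_pack: "sinv (pack w) = sinv w"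
  using same_pattern_sinv[OF same_pattern_standardize[of w]] by (simp add: pack_eq_standardize)

lemma sinv_sorted_append:
  "sorted p \<Longrightarrow> sinv (p @ v) = sinv v + (\<Sum>x\<leftarrow>p. card {y \<in> set v. y < x})"
proof (induction p)
  case (Cons x p)
  then have "{y \<in> set (p @ v). y < x} = {y \<in> set v. y < x}" by auto
  with Cons show ?case by (simp add: sinv_Cons)
qed simp

lemma sinv_sorted: "sorted p \<Longrightarrow> sinv p = 0"
  using sinv_sorted_append[of p "[]"] by (simp add: sinv_def)

section \<open>Compositions and their descent sets\<close>

fun partial_sums :: "nat list \<Rightarrow> nat list" where
  "partial_sums [] = []"
| "partial_sums (x # I) = x # map ((+) x) (partial_sums I)"

lemma length_partial_sums [simp]: "length (partial_sums I) = length I"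
  by (induction I) auto

lemma partial_sums_pos: "\<forall>x\<in>set I. 0 < x \<Longrightarrow> \<forall>y\<in>set (partial_sums I). 0 < y"
  by (induction I) auto

lemma sorted_wrt_partial_sums: "\<forall>x\<in>set I. 0 < x \<Longrightarrow> sorted_wrt (<) (partial_sums I)"
proof (induction I)
  case (Cons x I)
  then show ?case using partial_sums_pos[of I] by (auto simp: sorted_wrt_map)
qed simp

lemma card_set_partial_sums: "\<forall>x\<in>set I. 0 < x \<Longrightarrow> card (set (partial_sums I)) = length I"
  using sorted_wrt_partial_sums[of I] by (simp add: distinct_card strict_sorted_iff)

lemma set_partial_sums_merge:
  "set (partial_sums (a # b # I)) = insert a (set (partial_sums ((a + b) # I)))"
  by (auto simp: add.assoc)

lemma differences_partial_sums:
  "map (\<lambda>(a, b). a - b) (zip (map ((+) c) (partial_sums I)) (c # map ((+) c) (partial_sums I))) = I"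
proof (induction I arbitrary: c)
  case (Cons x I)
  have shift: "map ((+) c) (partial_sums (x # I)) = (c + x) # map ((+) (c + x)) (partial_sums I)"
    by (simp add: add.assoc comp_def)
  show ?case unfolding shift using Cons.IH[of "c + x"] by simp
qed simp

lemma partial_sums_differences:
  "sorted_wrt (<) ds \<Longrightarrow> \<forall>x\<in>set ds. c < x \<Longrightarrow>
    partial_sums (map (\<lambda>(a, b). a - b) (zip ds (c # ds))) = map (\<lambda>x. x - c) ds"
proof (induction ds arbitrary: c)
  case (Cons d ds)
  then have "partial_sums (map (\<lambda>(a, b). a - b) (zip ds (d # ds))) = map (\<lambda>x. x - d) ds" by auto
  moreover have "map ((+) (d - c)) (map (\<lambda>x. x - d) ds) = map (\<lambda>x. x - c) ds"
    using Cons.prems by auto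
  ultimately show ?case using Cons.prems by simp
qed simp

lemma comp_of_set_partial_sums:
  assumes "\<forall>x\<in>set I. 0 < x"
  shows "comp_of_set (set (partial_sums I)) = I"
proof -
  have "sorted_list_of_set (set (partial_sums I)) = partial_sums I"
    using sorted_wrt_partial_sums[OF assms]
    by (simp add: sorted_list_of_set.idem_if_sorted_distinct strict_sorted_iff)
  moreover have "map ((+) (0::nat)) xs = xs" for xs by (induction xs) auto
  ultimately show ?thesis
    using differences_partial_sums[of 0 I] by (simp add: comp_of_set_def Let_def)
qed

lemma partial_sums_comp_of_set:
  assumes "finite L" "0 \<notin> L"
  shows "set (partial_sums (comp_of_set L)) = L"
proof -
  have "\<forall>x\<in>set (sorted_list_of_set L). 0 < x" using assms by (auto intro: gr0I)
  then show ?thesis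
    using partial_sums_differences[of "sorted_list_of_set L" 0] assms
    by (simp add: comp_of_set_def Let_def)
qed

lemma WC_eq_iff:
  assumes "\<forall>x\<in>set I. 0 < x"
  shows "WC u = I \<longleftrightarrow> last_occ u = set (partial_sums I)"
proof
  assume "WC u = I"
  moreover have "finite (last_occ u)" "0 \<notin> last_occ u" by (auto simp: last_occ_def)
  ultimately show "last_occ u = set (partial_sums I)"
    using partial_sums_comp_of_set[of "last_occ u"] by (simp add: WC_def)
next
  assume "last_occ u = set (partial_sums I)"
  then show "WC u = I" using comp_of_set_partial_sums[OF assms] by (simp add: WC_def)
qed

section \<open>Gaussian binomials count bounded sorted lists\<close>

definition sorted_bounded_lists :: "nat \<Rightarrow> nat \<Rightarrow> nat list set" where
  "sorted_bounded_lists j N = {s. length s = j \<and> sorted s \<and> (\<forall>x\<in>set s. x < N)}"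

definition sorted_lists_weight :: "'a::field \<Rightarrow> nat \<Rightarrow> nat \<Rightarrow> 'a" where
  "sorted_lists_weight q j N = (\<Sum>s\<in>sorted_bounded_lists j N. q ^ sum_list s)"

lemma finite_sorted_bounded_lists: "finite (sorted_bounded_lists j N)"
proof (rule finite_subset)
  show "sorted_bounded_lists j N \<subseteq> {s. set s \<subseteq> {..<N} \<and> length s = j}"
    by (auto simp: sorted_bounded_lists_def)
qed (simp add: finite_lists_length_eq)

lemma sorted_bounded_lists_Suc:
  "sorted_bounded_lists (Suc j) (Suc N)
     = Cons 0 ` sorted_bounded_lists j (Suc N) \<union> map Suc ` sorted_bounded_lists (Suc j) N"
proof
  show "sorted_bounded_lists (Suc j) (Suc N)
     \<subseteq> Cons 0 ` sorted_bounded_lists j (Suc N) \<union> map Suc ` sorted_bounded_lists (Suc j) N"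
  proof
    fix s assume s: "s \<in> sorted_bounded_lists (Suc j) (Suc N)"
    then obtain x s' where xs: "s = x # s'" by (auto simp: sorted_bounded_lists_def length_Suc_conv)
    show "s \<in> Cons 0 ` sorted_bounded_lists j (Suc N) \<union> map Suc ` sorted_bounded_lists (Suc j) N"
    proof (cases x)
      case 0 then show ?thesis using s xs by (auto simp: sorted_bounded_lists_def)
    next
      case (Suc y)
      then have "\<forall>z\<in>set s. 0 < z" using s xs by (auto simp: sorted_bounded_lists_def)
      then have "s = map Suc (map (\<lambda>z. z - 1) s)" by (induction s) auto
      moreover have "map (\<lambda>z. z - 1) s \<in> sorted_bounded_lists (Suc j) N"
        using s \<open>\<forall>z\<in>set s. 0 < z\<close>
        by (auto simp: sorted_bounded_lists_def sorted_iff_nth_mono intro: diff_le_mono)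
      ultimately show ?thesis by blast
    qed
  qed
qed (auto simp: sorted_bounded_lists_def sorted_map)

lemma sorted_lists_weight_Suc:
  "sorted_lists_weight q (Suc j) (Suc N)
     = sorted_lists_weight q j (Suc N) + q ^ Suc j * sorted_lists_weight q (Suc j) N"
proof -
  have sum_list_Suc: "sum_list (map Suc s) = sum_list s + length s" for s
    by (induction s) auto
  have "Cons 0 ` sorted_bounded_lists j (Suc N) \<inter> map Suc ` sorted_bounded_lists (Suc j) N = {}"
    by auto
  then have "sorted_lists_weight q (Suc j) (Suc N)
      = (\<Sum>s\<in>Cons 0 ` sorted_bounded_lists j (Suc N). q ^ sum_list s)
      + (\<Sum>s\<in>map Suc ` sorted_bounded_lists (Suc j) N. q ^ sum_list s)"
    unfolding sorted_lists_weight_def sorted_bounded_lists_Suc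
    by (intro sum.union_disjoint) (auto simp: finite_sorted_bounded_lists)
  also have "(\<Sum>s\<in>Cons 0 ` sorted_bounded_lists j (Suc N). q ^ sum_list s) = sorted_lists_weight q j (Suc N)"
    unfolding sorted_lists_weight_def by (subst sum.reindex) (auto simp: inj_on_def)
  also have "(\<Sum>s\<in>map Suc ` sorted_bounded_lists (Suc j) N. q ^ sum_list s)
      = q ^ Suc j * sorted_lists_weight q (Suc j) N"
    unfolding sorted_lists_weight_def
    by (subst sum.reindex) (auto simp: inj_on_def sum_list_Suc sum_distrib_left power_add
        sorted_bounded_lists_def mult_ac)
  finally show ?thesis .
qed

lemma qbinom_eq_0: "n < k \<Longrightarrow> qbinom q n k = 0"
proof (induction n arbitrary: k)
  case 0 then show ?case by (cases k) auto
next
  case (Suc n) then show ?case by (cases k) auto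
qed

lemma sorted_lists_weight_eq_qbinom: "sorted_lists_weight q j (Suc N) = qbinom q (N + j) j"
proof (induction j arbitrary: N)
  case 0
  have "sorted_bounded_lists 0 M = {[]}" for M by (auto simp: sorted_bounded_lists_def)
  then show ?case by (simp add: sorted_lists_weight_def)
next
  case (Suc j)
  note outer_IH = Suc.IH
  show ?case
  proof (induction N)
    case 0
    have "sorted_bounded_lists (Suc j) 0 = {}" by (auto simp: sorted_bounded_lists_def)
    then have "sorted_lists_weight q (Suc j) 0 = 0" by (simp add: sorted_lists_weight_def)
    then show ?case
      using sorted_lists_weight_Suc[of q j 0] outer_IH[of 0] by (simp add: qbinom_eq_0)
  next
    case (Suc N)
    then show ?case using sorted_lists_weight_Suc[of q j "Suc N"] outer_IH[of "Suc N"] by simp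
  qed
qed

section \<open>Peeling off the first factor\<close>

definition prefix_ranks :: "nat \<Rightarrow> nat list \<Rightarrow> nat list" where
  "prefix_ranks j u = map (\<lambda>x. card {y \<in> set (drop j u). y < x}) (take j u)"

lemma length_prefix_ranks: "j \<le> length u \<Longrightarrow> length (prefix_ranks j u) = j"
  by (simp add: prefix_ranks_def)

lemma nth_prefix_ranks:
  "i < j \<Longrightarrow> j \<le> length u \<Longrightarrow> prefix_ranks j u ! i = card {y \<in> set (drop j u). y < u ! i}"
  by (simp add: prefix_ranks_def)

lemma sinv_sorted_prefix:
  assumes "sorted (take j u)"
  shows "sinv u = sinv (pack (drop j u)) + sum_list (prefix_ranks j u)"
  using sinv_sorted_append[OF assms, of "drop j u"] by (simp add: sinv_pack prefix_ranks_def)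

lemma alphaS_pack:
  "alphaS j (pack w) = (if length w = j \<and> sorted w then 1 else 0)"
  unfolding alphaS_def pack_eq_standardize
  using packed_standardize[of w] same_pattern_sorted_iff[OF same_pattern_standardize[of w]]
  by simp

lemma Sprod_Cons:
  assumes "packed u" "j \<le> length u"
  shows "Sprod q (j # J) u =
    (if sorted (take j u) then q ^ sum_list (prefix_ranks j u) * Sprod q J (pack (drop j u)) else 0)"
proof -
  define f where "f k = alphaS j (pack (take k u)) * Sprod q J (pack (drop k u)) *
      q powi (int (sinv u) - int (sinv (pack (take k u))) - int (sinv (pack (drop k u))))" for k
  have "Sprod q (j # J) u = (\<Sum>k\<le>length u. f k)"
    using assms(1) by (simp add: qprod_def f_def)
  also have "\<dots> = f j"
    using assms(2) by (subst sum.mono_neutral_right[of _ "{j}"]) (auto simp: f_def alphaS_pack)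
  also have "\<dots> = (if sorted (take j u)
      then q ^ sum_list (prefix_ranks j u) * Sprod q J (pack (drop j u)) else 0)"
  proof (cases "sorted (take j u)")
    case True
    have "sinv (pack (take j u)) = 0" using sinv_sorted[OF True] by (simp add: sinv_pack)
    then show ?thesis
      using True assms sinv_sorted_prefix[OF True]
      by (simp add: f_def alphaS_pack power_int_of_nat)
  qed (simp add: f_def alphaS_pack)
  finally show ?thesis .
qed

section \<open>The fibres of the suffix map\<close>

definition sorted_prefix_fiber :: "nat \<Rightarrow> nat list \<Rightarrow> nat set \<Rightarrow> nat list set" where
  "sorted_prefix_fiber j v E = {u. packed u \<and> length u = j + length v \<and> sorted (take j u)
      \<and> pack (drop j u) = v \<and> last_positions u \<inter> {..<j} = E}"

text \<open>For a word of the fibre, prefix position i carries a letter absent from the suffix iff some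
  later prefix position in E has the same prefix rank; the least such position is the last
  occurrence of that letter.\<close>

definition new_letter :: "nat set \<Rightarrow> nat list \<Rightarrow> nat \<Rightarrow> bool" where
  "new_letter E s i \<longleftrightarrow> (\<exists>e\<in>E. i \<le> e \<and> s ! e = s ! i)"

definition new_letter_end :: "nat set \<Rightarrow> nat list \<Rightarrow> nat \<Rightarrow> nat" where
  "new_letter_end E s i = (LEAST e. e \<in> E \<and> i \<le> e \<and> s ! e = s ! i)"

lemma new_letter_end:
  assumes "new_letter E s i"
  shows "new_letter_end E s i \<in> E" "i \<le> new_letter_end E s i"
    "s ! new_letter_end E s i = s ! i"
proof -
  obtain e where "e \<in> E \<and> i \<le> e \<and> s ! e = s ! i" using assms new_letter_def by auto
  then have "new_letter_end E s i \<in> E \<and> i \<le> new_letter_end E s i \<and> s ! new_letter_end E s i = s ! i"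
    unfolding new_letter_end_def by (rule LeastI)
  then show "new_letter_end E s i \<in> E" "i \<le> new_letter_end E s i"
    "s ! new_letter_end E s i = s ! i" by auto
qed

lemma new_letter_end_le: "e \<in> E \<Longrightarrow> i \<le> e \<Longrightarrow> s ! e = s ! i \<Longrightarrow> new_letter_end E s i \<le> e"
  unfolding new_letter_end_def by (rule Least_le) auto

lemma new_letter_end_self:
  assumes "i \<in> E"
  shows "new_letter E s i" "new_letter_end E s i = i"
proof -
  show "new_letter E s i" using assms by (auto simp: new_letter_def)
  then show "new_letter_end E s i = i"
    using new_letter_end_le[OF assms, of i s] new_letter_end(2) by (simp add: le_antisym)
qed

text \<open>A word of the fibre is recovered from its prefix ranks s by standardizing these tags, compared
  lexicographically: the suffix letter of rank r gets (2 r, 0); a prefix letter of prefix rank s_i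
  either equals the suffix letter of rank s_i + 1 or is a new letter strictly between the suffix
  letters of ranks s_i and s_i + 1, and new letters are ordered by their last occurrences.\<close>

definition prefix_tag :: "nat set \<Rightarrow> nat list \<Rightarrow> nat \<Rightarrow> nat \<times> nat" where
  "prefix_tag E s i =
     (if new_letter E s i then (2 * s ! i + 1, new_letter_end E s i) else (2 * s ! i + 2, 0))"

definition tag_word :: "nat \<Rightarrow> nat set \<Rightarrow> nat list \<Rightarrow> nat list \<Rightarrow> (nat \<times> nat) list" where
  "tag_word j E v s = map (prefix_tag E s) [0..<j] @ map (\<lambda>r. (2 * r, 0)) v"

lemma length_tag_word [simp]: "length (tag_word j E v s) = j + length v"
  by (simp add: tag_word_def)

lemma nth_tag_word_prefix: "i < j \<Longrightarrow> tag_word j E v s ! i = prefix_tag E s i"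
  by (simp add: tag_word_def nth_append)

lemma nth_tag_word_suffix: "c < length v \<Longrightarrow> tag_word j E v s ! (j + c) = (2 * v ! c, 0)"
  by (simp add: tag_word_def nth_append)

text \<open>The same tags, computed from the letters of a word u of the fibre with suffix letters V.\<close>

definition letter_tag :: "nat set \<Rightarrow> nat list \<Rightarrow> nat \<Rightarrow> nat \<times> nat" where
  "letter_tag V u x =
     (if x \<in> V then (2 * card {y \<in> V. y < x} + 2, 0)
      else (2 * card {y \<in> V. y < x} + 1, the_inv_into (last_positions u) (nth u) x))"

text \<open>A prefix rank reaches the number of suffix letters only at a new letter at the very end.\<close>

definition rank_bound :: "nat \<Rightarrow> nat set \<Rightarrow> nat list \<Rightarrow> nat" where
  "rank_bound j E v = card (set v) + (if j - 1 \<in> E then 1 else 0)"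

context
  fixes j :: nat and E :: "nat set" and v :: "nat list"
  assumes packed_v: "packed v" and E_less: "E \<subseteq> {..<j}" and j_pos: "0 < j"
begin

lemma new_letter_end_less: "new_letter E s i \<Longrightarrow> new_letter_end E s i < j"
  using new_letter_end(1) E_less by auto

lemma sorted_bounded_rank_bound:
  assumes "s \<in> sorted_bounded_lists j (rank_bound j E v)" "i < j"
  shows "s ! i \<le> card (set v)" "\<not> new_letter E s i \<Longrightarrow> s ! i < card (set v)"
proof -
  have s: "sorted s" "length s = j" "\<And>i. i < j \<Longrightarrow> s ! i < rank_bound j E v"
    using assms(1) by (auto simp: sorted_bounded_lists_def)
  have le: "s ! i \<le> card (set v)" if "i < j" for i
    using that s(3) by (fastforce simp: rank_bound_def split: if_splits)
  then show "s ! i \<le> card (set v)" using assms(2) .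
  assume "\<not> new_letter E s i"
  show "s ! i < card (set v)"
  proof (rule ccontr)
    assume "\<not> s ! i < card (set v)"
    then have "s ! i = card (set v)" using le[OF assms(2)] by simp
    moreover have "s ! i \<le> s ! (j - 1)" using s assms(2) by (simp add: sorted_iff_nth_mono)
    ultimately have "s ! (j - 1) = s ! i" "j - 1 \<in> E"
      using le[of "j - 1"] s(3)[of "j - 1"] j_pos by (auto simp: rank_bound_def split: if_splits)
    then show False using \<open>\<not> new_letter E s i\<close> assms(2) by (auto simp: new_letter_def)
  qed
qed

lemma prefix_tag_mono:
  assumes "sorted s" "length s = j" "a \<le> b" "b < j"
  shows "prefix_tag E s a \<le> prefix_tag E s b"
proof (cases "s ! a < s ! b")
  case True
  then show ?thesis by (auto simp: prefix_tag_def)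
next
  case False
  moreover have "s ! a \<le> s ! b" using assms by (simp add: sorted_iff_nth_mono)
  ultimately have eq: "s ! a = s ! b" by simp
  show ?thesis
  proof (cases "new_letter E s b")
    case True
    then have "new_letter E s a"
      using new_letter_end[OF True] eq assms(3) unfolding new_letter_def
      by (metis le_trans)
    moreover have "new_letter_end E s a \<le> new_letter_end E s b"
      using new_letter_end[OF True] new_letter_end_le[of _ E a s] eq assms(3) by simp
    ultimately show ?thesis using True eq by (simp add: prefix_tag_def)
  qed (use eq in \<open>auto simp: prefix_tag_def\<close>)
qed

lemma E_subset_last_positions_tag_word: "E \<subseteq> last_positions (tag_word j E v s)"
proof
  let ?T = "tag_word j E v s"
  fix i assume "i \<in> E"
  then have "i < j" using E_less by auto
  have tag_i: "?T ! i = (2 * s ! i + 1, i)"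
    using new_letter_end_self[OF \<open>i \<in> E\<close>] \<open>i < j\<close>
    by (simp add: nth_tag_word_prefix prefix_tag_def)
  have "?T ! k \<noteq> ?T ! i" if "i < k" "k < j + length v" for k
  proof (cases "k < j")
    case True
    have "2 * s ! k + 2 \<noteq> 2 * s ! i + 1" by presburger
    then show ?thesis
      using True tag_i that new_letter_end(2)[of E s k] by (auto simp: nth_tag_word_prefix prefix_tag_def)
  next
    case False
    define c where "c = k - j"
    have "k = j + c" "c < length v" using False that by (auto simp: c_def)
    moreover have "2 * v ! c \<noteq> 2 * s ! i + 1" by presburger
    ultimately show ?thesis using tag_i by (auto simp: nth_tag_word_suffix)
  qed
  then show "i \<in> last_positions ?T" using \<open>i < j\<close> by (auto simp: last_positions_iff)
qed

lemma last_positions_tag_word_subset: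
  assumes "s \<in> sorted_bounded_lists j (rank_bound j E v)"
  shows "last_positions (tag_word j E v s) \<inter> {..<j} \<subseteq> E"
proof (rule subsetI, rule ccontr)
  let ?T = "tag_word j E v s"
  fix i assume i: "i \<in> last_positions ?T \<inter> {..<j}" and "i \<notin> E"
  have "\<exists>k. i < k \<and> k < j + length v \<and> ?T ! k = ?T ! i"
  proof (cases "new_letter E s i")
    case True
    let ?e = "new_letter_end E s i"
    have "?e \<in> E" "s ! ?e = s ! i" "?e < j"
      using new_letter_end[OF True] new_letter_end_less[OF True] by auto
    moreover have "i < ?e"
      using new_letter_end(2)[OF True] \<open>?e \<in> E\<close> \<open>i \<notin> E\<close> by (cases "i = ?e") auto
    moreover have "?T ! ?e = ?T ! i"
      using calculation new_letter_end_self[of ?e E s] True i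
      by (simp add: nth_tag_word_prefix prefix_tag_def)
    ultimately show ?thesis by (intro exI[of _ ?e]) auto
  next
    case False
    have "Suc (s ! i) \<in> set v"
      using sorted_bounded_rank_bound(2)[OF assms _ False] i
      by (subst packed_eq_atLeastAtMost[OF packed_v]) simp
    then obtain c where "c < length v" "v ! c = Suc (s ! i)" by (auto simp: in_set_conv_nth)
    then show ?thesis
      using False i
      by (intro exI[of _ "j + c"]) (simp add: nth_tag_word_prefix nth_tag_word_suffix prefix_tag_def)
  qed
  then show False using i by (auto simp: last_positions_iff)
qed

lemma prefix_ranks_standardize_tag_word:
  assumes "s \<in> sorted_bounded_lists j (rank_bound j E v)"
  shows "prefix_ranks j (standardize (tag_word j E v s)) = s"
proof (rule nth_equalityI)
  let ?T = "tag_word j E v s"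
  have len: "length s = j" using assms by (simp add: sorted_bounded_lists_def)
  then show "length (prefix_ranks j (standardize ?T)) = length s"
    by (simp add: length_prefix_ranks)
  fix i assume "i < length (prefix_ranks j (standardize ?T))"
  then have i: "i < j" by (simp add: length_prefix_ranks)
  have "prefix_ranks j (standardize ?T) ! i = card {y \<in> set (drop j ?T). y < ?T ! i}"
    using nth_prefix_ranks[OF i] i
      same_pattern_card_set_less[OF same_pattern_standardize[of ?T], of i j]
    by simp
  also have "{y \<in> set (drop j ?T). y < ?T ! i} = (\<lambda>r. (2 * r, 0)) ` {1..s ! i}"
  proof -
    have "set v = {1..card (set v)}" using packed_eq_atLeastAtMost[OF packed_v] .
    then have "set (drop j ?T) = (\<lambda>r. (2 * r, 0)) ` {1..card (set v)}"
      by (simp add: tag_word_def)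
    moreover have "(2 * r, 0) < ?T ! i \<longleftrightarrow> r \<le> s ! i" for r
      using i by (auto simp: nth_tag_word_prefix prefix_tag_def)
    ultimately show ?thesis
      using sorted_bounded_rank_bound(1)[OF assms i] by auto
  qed
  also have "card ((\<lambda>r. (2 * r, 0::nat)) ` {1..s ! i}) = s ! i"
    by (subst card_image) (auto simp: inj_on_def)
  finally show "prefix_ranks j (standardize ?T) ! i = s ! i" .
qed

lemma standardize_tag_word_in_fiber:
  assumes "s \<in> sorted_bounded_lists j (rank_bound j E v)"
  shows "standardize (tag_word j E v s) \<in> sorted_prefix_fiber j v E"
proof -
  let ?T = "tag_word j E v s"
  have "sorted (take j ?T)"
    using prefix_tag_mono assms
    by (auto simp: sorted_iff_nth_mono sorted_bounded_lists_def nth_tag_word_prefix)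
  then have "sorted (take j (standardize ?T))"
    using same_pattern_sorted_iff[OF same_pattern_take[OF same_pattern_standardize]] by blast
  moreover have "pack (drop j (standardize ?T)) = v"
  proof -
    have "standardize (drop j (standardize ?T)) = standardize (drop j ?T)"
      by (rule standardize_eq_if_same_pattern[OF same_pattern_drop[OF same_pattern_standardize]])
    also have "\<dots> = standardize v"
      by (rule standardize_eq_if_same_pattern)
        (simp add: tag_word_def same_pattern_map strict_mono_on_def)
    finally show ?thesis by (simp add: pack_eq_standardize standardize_packed[OF packed_v])
  qed
  moreover have "last_positions (standardize ?T) \<inter> {..<j} = E"
    using E_subset_last_positions_tag_word last_positions_tag_word_subset[OF assms] E_less
      same_pattern_last_positions[OF same_pattern_standardize[of ?T]]
    by auto
  ultimately show ?thesis
    using packed_standardize by (simp add: sorted_prefix_fiber_def)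
qed

context
  fixes u :: "nat list"
  assumes u_fiber: "u \<in> sorted_prefix_fiber j v E"
begin

lemma fiber_length: "length u = j + length v"
  and fiber_pack_suffix: "pack (drop j u) = v"
  and fiber_last_positions: "last_positions u \<inter> {..<j} = E"
  using u_fiber by (auto simp: sorted_prefix_fiber_def)

lemma fiber_prefix_sorted: "i \<le> i' \<Longrightarrow> i' < j \<Longrightarrow> u ! i \<le> u ! i'"
  using u_fiber by (auto simp: sorted_prefix_fiber_def sorted_iff_nth_mono)

lemma fiber_nth_prefix_ranks: "i < j \<Longrightarrow> prefix_ranks j u ! i = card {y \<in> set (drop j u). y < u ! i}"
  using fiber_length by (simp add: nth_prefix_ranks)

lemma fiber_suffix_letter: "j \<le> k \<Longrightarrow> k < length u \<Longrightarrow> u ! k \<in> set (drop j u)"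
  unfolding in_set_drop_iff_nth by auto

lemma fiber_last_position_of_new_letter:
  assumes "i < j" "u ! i \<notin> set (drop j u)"
  obtains e where "i \<le> e" "e \<in> E" "u ! e = u ! i"
proof -
  obtain e where e: "i \<le> e" "e \<in> last_positions u" "u ! e = u ! i"
    using last_position_exists[of i u] assms fiber_length by auto
  then have "e < j"
    using fiber_suffix_letter[of e] assms(2) last_positions_less_length[OF e(2)] by force
  then show ?thesis using that e fiber_last_positions by auto
qed

lemma fiber_new_letter_iff:
  assumes "i < j"
  shows "new_letter E (prefix_ranks j u) i \<longleftrightarrow> u ! i \<notin> set (drop j u)"
proof
  let ?V = "set (drop j u)"
  assume "new_letter E (prefix_ranks j u) i"
  then obtain e where e: "e \<in> E" "i \<le> e" "prefix_ranks j u ! e = prefix_ranks j u ! i"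
    unfolding new_letter_def by blast
  have "e < j" "e \<in> last_positions u" using e(1) E_less fiber_last_positions by auto
  then have "u ! e \<notin> ?V"
    unfolding in_set_drop_iff_nth last_positions_iff by force
  show "u ! i \<notin> ?V"
  proof
    assume "u ! i \<in> ?V"
    then have "u ! i < u ! e"
      using fiber_prefix_sorted[OF e(2) \<open>e < j\<close>] \<open>u ! e \<notin> ?V\<close> le_neq_implies_less by metis
    then have "card {y \<in> ?V. y < u ! i} < card {y \<in> ?V. y < u ! e}"
      using \<open>u ! i \<in> ?V\<close> by (intro psubset_card_mono) auto
    then show False using e(3) assms \<open>e < j\<close> by (simp add: fiber_nth_prefix_ranks)
  qed
next
  assume "u ! i \<notin> set (drop j u)"
  then obtain e where "i \<le> e" "e \<in> E" "u ! e = u ! i"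
    using fiber_last_position_of_new_letter assms by blast
  then show "new_letter E (prefix_ranks j u) i"
    using assms E_less by (auto simp: new_letter_def fiber_nth_prefix_ranks intro!: bexI[of _ e])
qed

lemma fiber_new_letter_end:
  assumes "i < j" "u ! i \<notin> set (drop j u)"
  shows "new_letter_end E (prefix_ranks j u) i \<in> last_positions u"
    "u ! new_letter_end E (prefix_ranks j u) i = u ! i"
proof -
  let ?s = "prefix_ranks j u" and ?e = "new_letter_end E (prefix_ranks j u) i"
  have new: "new_letter E ?s i" using fiber_new_letter_iff assms by simp
  obtain e where e: "i \<le> e" "e \<in> E" "u ! e = u ! i"
    using fiber_last_position_of_new_letter assms by blast
  have "e < j" using e(2) E_less by auto
  have "?e \<le> e"
    using new_letter_end_le[OF e(2,1)] e(3) assms \<open>e < j\<close> by (simp add: fiber_nth_prefix_ranks)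
  moreover have "?e \<in> E" "i \<le> ?e" using new_letter_end[OF new] by auto
  ultimately have "u ! i \<le> u ! ?e" "u ! ?e \<le> u ! e"
    using fiber_prefix_sorted \<open>e < j\<close> by auto
  then show "u ! ?e = u ! i" using e(3) by simp
  show "?e \<in> last_positions u" using \<open>?e \<in> E\<close> fiber_last_positions by auto
qed

lemma fiber_prefix_ranks_in_sorted_bounded:
  "prefix_ranks j u \<in> sorted_bounded_lists j (rank_bound j E v)"
proof -
  let ?s = "prefix_ranks j u" and ?V = "set (drop j u)"
  have card_V: "card ?V = card (set v)"
    using card_set_standardize[of "drop j u"] fiber_pack_suffix by (simp add: pack_eq_standardize)
  have mono: "?s ! a \<le> ?s ! b" if "a \<le> b" "b < j" for a b
    using that fiber_prefix_sorted[OF that] by (simp add: fiber_nth_prefix_ranks) (intro card_mono, auto)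
  have "?s ! i < rank_bound j E v" if "i < j" for i
  proof (cases "j - 1 \<in> E")
    case True
    have "?s ! i \<le> card ?V" using that by (simp add: fiber_nth_prefix_ranks) (intro card_mono, auto)
    then show ?thesis using True card_V by (simp add: rank_bound_def)
  next
    case False
    have "j - 1 < j" "j - 1 < length u" using j_pos fiber_length by auto
    then have "j - 1 \<notin> last_positions u" using False fiber_last_positions by auto
    then obtain k where "j - 1 < k" "k < length u" "u ! k = u ! (j - 1)"
      unfolding last_positions_iff using \<open>j - 1 < length u\<close> by auto
    then have "u ! (j - 1) \<in> ?V" using fiber_suffix_letter[of k] by simp
    then have "card {y \<in> ?V. y < u ! (j - 1)} < card ?V"
      by (intro psubset_card_mono) auto
    moreover have "?s ! i \<le> ?s ! (j - 1)" using mono that by simp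
    ultimately show ?thesis
      using False card_V \<open>j - 1 < j\<close> by (simp add: rank_bound_def fiber_nth_prefix_ranks)
  qed
  then show ?thesis
    using mono fiber_length
    by (auto simp: sorted_bounded_lists_def length_prefix_ranks sorted_iff_nth_mono in_set_conv_nth)
qed

lemma fiber_the_inv_into_last_positions:
  assumes "x \<in> set u"
  shows "the_inv_into (last_positions u) (nth u) x \<in> last_positions u"
    "u ! the_inv_into (last_positions u) (nth u) x = x"
  using assms bij_betw_nth_last_positions[of u]
  by (auto simp: bij_betw_def the_inv_into_into f_the_inv_into_f)

lemma strict_mono_on_letter_tag: "strict_mono_on (set u) (letter_tag (set (drop j u)) u)"
proof (rule strict_mono_onI)
  let ?V = "set (drop j u)" and ?e = "the_inv_into (last_positions u) (nth u)"
  fix x y assume x: "x \<in> set u" and y: "y \<in> set u" and "x < y"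
  have c_le: "card {z \<in> ?V. z < x} \<le> card {z \<in> ?V. z < y}"
    by (intro card_mono) (use \<open>x < y\<close> in auto)
  have c_less: "card {z \<in> ?V. z < x} < card {z \<in> ?V. z < y}" if "x \<in> ?V"
  proof (rule psubset_card_mono)
    have "x \<in> {z \<in> ?V. z < y}" "x \<notin> {z \<in> ?V. z < x}" using that \<open>x < y\<close> by auto
    then show "{z \<in> ?V. z < x} \<subset> {z \<in> ?V. z < y}" using \<open>x < y\<close> by auto
  qed simp
  have e_less: "?e z < j" if "z \<in> set u" "z \<notin> ?V" for z
    using fiber_the_inv_into_last_positions[OF that(1)] that(2) fiber_suffix_letter[of "?e z"]
      last_positions_less_length by force
  show "letter_tag ?V u x < letter_tag ?V u y"
  proof (cases "x \<in> ?V")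
    case True
    then show ?thesis using c_less[OF True] by (auto simp: letter_tag_def)
  next
    case x_new: False
    show ?thesis
    proof (cases "y \<in> ?V")
      case True
      then show ?thesis using c_le x_new by (auto simp: letter_tag_def)
    next
      case y_new: False
      have "?e x < ?e y"
      proof (rule ccontr)
        assume "\<not> ?e x < ?e y"
        then have "u ! ?e y \<le> u ! ?e x"
          using fiber_prefix_sorted e_less[OF x x_new] by simp
        then show False
          using fiber_the_inv_into_last_positions(2)[OF x] fiber_the_inv_into_last_positions(2)[OF y]
            \<open>x < y\<close> by simp
      qed
      then show ?thesis using c_le x_new y_new by (auto simp: letter_tag_def)
    qed
  qed
qed

lemma tag_word_prefix_ranks:
  "tag_word j E v (prefix_ranks j u) = map (letter_tag (set (drop j u)) u) u"
proof (rule nth_equalityI)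
  let ?V = "set (drop j u)" and ?s = "prefix_ranks j u"
  show "length (tag_word j E v ?s) = length (map (letter_tag ?V u) u)"
    using fiber_length by simp
  fix i assume "i < length (tag_word j E v ?s)"
  then have i: "i < length u" using fiber_length by simp
  show "tag_word j E v ?s ! i = map (letter_tag ?V u) u ! i"
  proof (cases "i < j")
    case True
    show ?thesis
    proof (cases "u ! i \<in> ?V")
      case False
      have "the_inv_into (last_positions u) (nth u) (u ! i) = new_letter_end E ?s i"
        using fiber_new_letter_end[OF \<open>i < j\<close> False] bij_betw_nth_last_positions[of u]
        by (intro the_inv_into_f_eq) (auto simp: bij_betw_def)
      then show ?thesis
        using True i False fiber_new_letter_iff[OF True]
        by (simp add: nth_tag_word_prefix prefix_tag_def letter_tag_def fiber_nth_prefix_ranks)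
    qed (use True i fiber_new_letter_iff[OF True] in
      \<open>simp add: nth_tag_word_prefix prefix_tag_def letter_tag_def fiber_nth_prefix_ranks\<close>)
  next
    case False
    define c where "c = i - j"
    have ic: "i = j + c" "c < length v" using False i fiber_length by (auto simp: c_def)
    have V: "u ! i \<in> ?V" using fiber_suffix_letter False i by simp
    have "v ! c = pack (drop j u) ! c" using fiber_pack_suffix by simp
    also have "\<dots> = card {y \<in> ?V. y \<le> u ! i}"
      using ic fiber_length by (simp add: pack_def)
    also have "{y \<in> ?V. y \<le> u ! i} = insert (u ! i) {y \<in> ?V. y < u ! i}"
      using V by auto
    finally have "v ! c = Suc (card {y \<in> ?V. y < u ! i})" by simp
    then show ?thesis
      using ic V i by (simp add: nth_tag_word_suffix letter_tag_def)
  qed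
qed

lemma standardize_tag_word_prefix_ranks: "standardize (tag_word j E v (prefix_ranks j u)) = u"
proof -
  have "standardize (tag_word j E v (prefix_ranks j u)) = standardize u"
    unfolding tag_word_prefix_ranks
    by (rule standardize_eq_if_same_pattern[OF same_pattern_map[OF strict_mono_on_letter_tag]])
  also have "\<dots> = u"
    using u_fiber by (simp add: sorted_prefix_fiber_def standardize_packed)
  finally show ?thesis .
qed

end

lemma sum_sorted_prefix_fiber:
  "(\<Sum>u\<in>sorted_prefix_fiber j v E. q ^ sum_list (prefix_ranks j u))
     = sorted_lists_weight q j (rank_bound j E v)"
proof -
  have "bij_betw (prefix_ranks j) (sorted_prefix_fiber j v E) (sorted_bounded_lists j (rank_bound j E v))"
    by (rule bij_betw_byWitness[where f' = "\<lambda>s. standardize (tag_word j E v s)"])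
      (auto simp: standardize_tag_word_prefix_ranks prefix_ranks_standardize_tag_word
        fiber_prefix_ranks_in_sorted_bounded standardize_tag_word_in_fiber)
  then show ?thesis
    unfolding sorted_lists_weight_def by (rule sum.reindex_bij_betw)
qed

end

section \<open>The recursion for the coefficients\<close>

definition descents_after :: "nat \<Rightarrow> nat set \<Rightarrow> nat set" where
  "descents_after j P = (\<lambda>x. x - j) ` {x \<in> P. j < x}"

lemma last_occ_drop: "last_occ (drop j u) = descents_after j (last_occ u)"
proof (rule set_eqI, rule iffI)
  fix y assume "y \<in> last_occ (drop j u)"
  then obtain i where "y = Suc i" "i + j \<in> last_positions u"
    by (auto simp: last_occ_eq_Suc_last_positions last_positions_drop)
  then show "y \<in> descents_after j (last_occ u)"
    unfolding descents_after_def last_occ_eq_Suc_last_positions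
    by (intro image_eqI[of _ _ "Suc (i + j)"]) auto
next
  fix y assume "y \<in> descents_after j (last_occ u)"
  then obtain l where "l \<in> last_positions u" "j \<le> l" "y = Suc l - j"
    by (auto simp: descents_after_def last_occ_eq_Suc_last_positions)
  then show "y \<in> last_occ (drop j u)"
    unfolding last_occ_eq_Suc_last_positions last_positions_drop
    by (intro image_eqI[of _ _ "l - j"]) auto
qed

lemma last_occ_pack: "last_occ (pack w) = last_occ w"
  using same_pattern_last_positions[OF same_pattern_standardize[of w]]
  by (simp add: last_occ_eq_Suc_last_positions pack_eq_standardize)

lemma eq_iff_descents_after_eq:
  assumes "descents_after j L = descents_after j P"
  shows "L = P \<longleftrightarrow> {x \<in> L. x \<le> j} = {x \<in> P. x \<le> j}"
proof -
  have "inj_on (\<lambda>x. x - j) {x. j < x}" by (auto simp: inj_on_def)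
  then have "{x \<in> L. j < x} = {x \<in> P. j < x}"
    using assms unfolding descents_after_def by (subst (asm) inj_on_image_eq_iff) auto
  then have high: "x \<in> L \<longleftrightarrow> x \<in> P" if "j < x" for x
    using that by blast
  show ?thesis
  proof
    assume "{x \<in> L. x \<le> j} = {x \<in> P. x \<le> j}"
    then have "x \<in> L \<longleftrightarrow> x \<in> P" if "x \<le> j" for x
      using that by blast
    then show "L = P" using high by (meson not_le set_eqI)
  qed simp
qed

definition words_with_last_occ :: "nat \<Rightarrow> nat set \<Rightarrow> nat list set" where
  "words_with_last_occ L P = {u. packed u \<and> length u = L \<and> last_occ u = P}"

lemma finite_words_with_last_occ: "finite (words_with_last_occ L P)"
  by (rule finite_subset[OF _ finite_packed_length[of L]]) (auto simp: words_with_last_occ_def)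

lemma CIJ_eq_sum:
  assumes "\<forall>x\<in>set I. 0 < x"
  shows "CIJ q I J = (\<Sum>u\<in>words_with_last_occ (sum_list I) (set (partial_sums I)). Sprod q J u)"
proof -
  have "{u. packed u \<and> length u = sum_list I \<and> WC u = I}
      = words_with_last_occ (sum_list I) (set (partial_sums I))"
    using WC_eq_iff[OF assms] by (auto simp: words_with_last_occ_def)
  then show ?thesis by (simp add: CIJ_def SJ_def zeta_def)
qed

lemma pack_drop_in_words_with_last_occ:
  assumes "u \<in> words_with_last_occ n P"
  shows "pack (drop j u) \<in> words_with_last_occ (n - j) (descents_after j P)"
proof -
  have "last_occ (pack (drop j u)) = descents_after j P"
    using assms by (simp add: last_occ_pack last_occ_drop words_with_last_occ_def)
  moreover have "packed (pack (drop j u))"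
    using packed_standardize by (simp add: pack_eq_standardize)
  ultimately show ?thesis
    using assms by (simp add: words_with_last_occ_def pack_def)
qed

lemma words_with_last_occ_sorted_prefix_fiber:
  assumes "v \<in> words_with_last_occ (n - j) (descents_after j P)" "0 \<notin> P" "j \<le> n"
  shows "{u \<in> words_with_last_occ n P. sorted (take j u) \<and> pack (drop j u) = v}
       = sorted_prefix_fiber j v {i. i < j \<and> Suc i \<in> P}"
proof (rule set_eqI)
  fix u
  have v: "length v = n - j" "last_occ v = descents_after j P"
    using assms(1) by (auto simp: words_with_last_occ_def)
  have "last_occ u = P \<longleftrightarrow> last_positions u \<inter> {..<j} = {i. i < j \<and> Suc i \<in> P}"
    if "pack (drop j u) = v"
  proof -
    have "descents_after j (last_occ u) = last_occ (pack (drop j u))"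
      by (simp only: last_occ_pack last_occ_drop)
    also have "\<dots> = descents_after j P" using that v by simp
    finally have "last_occ u = P \<longleftrightarrow> {x \<in> last_occ u. x \<le> j} = {x \<in> P. x \<le> j}"
      by (rule eq_iff_descents_after_eq)
    also have "{x \<in> last_occ u. x \<le> j} = Suc ` (last_positions u \<inter> {..<j})"
      by (auto simp: last_occ_eq_Suc_last_positions)
    also have "{x \<in> P. x \<le> j} = Suc ` {i. i < j \<and> Suc i \<in> P}"
      using assms(2) by (auto simp: image_iff) (metis Suc_le_eq not0_implies_Suc)
    finally show ?thesis by (simp add: inj_image_eq_iff)
  qed
  then show "u \<in> {u \<in> words_with_last_occ n P. sorted (take j u) \<and> pack (drop j u) = v}
      \<longleftrightarrow> u \<in> sorted_prefix_fiber j v {i. i < j \<and> Suc i \<in> P}"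
    using v assms(3) by (auto simp: words_with_last_occ_def sorted_prefix_fiber_def)
qed

lemma CIJ_Cons_eq_sum_sorted_prefix:
  assumes pos: "\<forall>x\<in>set I. 0 < x" and n: "sum_list I = n" and "j \<le> n"
  shows "CIJ q I (j # J) = (\<Sum>u\<in>{u \<in> words_with_last_occ n (set (partial_sums I)). sorted (take j u)}.
      q ^ sum_list (prefix_ranks j u) * Sprod q J (pack (drop j u)))"
proof -
  let ?U = "words_with_last_occ n (set (partial_sums I))"
  have "CIJ q I (j # J) = (\<Sum>u\<in>?U. Sprod q (j # J) u)"
    using CIJ_eq_sum[OF pos, of q "j # J"] n by (simp del: Sprod.simps)
  also have "\<dots> = (\<Sum>u\<in>?U. if sorted (take j u)
      then q ^ sum_list (prefix_ranks j u) * Sprod q J (pack (drop j u)) else 0)"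
    by (rule sum.cong)
      (use \<open>j \<le> n\<close> in \<open>auto simp: words_with_last_occ_def Sprod_Cons simp del: Sprod.simps\<close>)
  also have "\<dots> = (\<Sum>u\<in>{u \<in> ?U. sorted (take j u)}.
      q ^ sum_list (prefix_ranks j u) * Sprod q J (pack (drop j u)))"
    by (rule sum.inter_filter[symmetric]) (simp add: finite_words_with_last_occ)
  finally show ?thesis .
qed

lemma CIJ_Cons:
  assumes pos: "\<forall>x\<in>set I. 0 < x" and n: "sum_list I = n" and j: "0 < j" "j \<le> n"
  defines "P \<equiv> set (partial_sums I)"
  shows "CIJ q I (j # J) = (\<Sum>v\<in>words_with_last_occ (n - j) (descents_after j P).
      Sprod q J v * sorted_lists_weight q j (card (set v) + (if j \<in> P then 1 else 0)))"
proof -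
  let ?W = "words_with_last_occ (n - j) (descents_after j P)"
  define U where "U = {u \<in> words_with_last_occ n P. sorted (take j u)}"
  define E where "E = {i. i < j \<and> Suc i \<in> P}"
  define wt where "wt u = q ^ sum_list (prefix_ranks j u) * Sprod q J (pack (drop j u))" for u
  have "0 \<notin> P" using partial_sums_pos[OF pos] by (auto simp: P_def)
  have "CIJ q I (j # J) = (\<Sum>u\<in>U. wt u)"
    using CIJ_Cons_eq_sum_sorted_prefix[OF pos n j(2)] by (simp add: U_def P_def wt_def)
  also have "\<dots> = (\<Sum>v\<in>?W. \<Sum>u\<in>{u \<in> U. pack (drop j u) = v}. wt u)"
    by (rule sum.group[symmetric])
      (auto simp: U_def finite_words_with_last_occ pack_drop_in_words_with_last_occ)
  also have "\<dots> = (\<Sum>v\<in>?W. Sprod q J v * (\<Sum>u\<in>sorted_prefix_fiber j v E. q ^ sum_list (prefix_ranks j u)))"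
  proof (rule sum.cong[OF refl])
    fix v assume "v \<in> ?W"
    then have "{u \<in> U. pack (drop j u) = v} = sorted_prefix_fiber j v E"
      using words_with_last_occ_sorted_prefix_fiber[OF _ \<open>0 \<notin> P\<close> j(2)] by (auto simp: U_def E_def)
    then show "(\<Sum>u\<in>{u \<in> U. pack (drop j u) = v}. wt u)
        = Sprod q J v * (\<Sum>u\<in>sorted_prefix_fiber j v E. q ^ sum_list (prefix_ranks j u))"
      by (auto simp: wt_def sorted_prefix_fiber_def sum_distrib_left mult.commute intro: sum.cong)
  qed
  also have "\<dots> = (\<Sum>v\<in>?W. Sprod q J v * sorted_lists_weight q j (card (set v) + (if j \<in> P then 1 else 0)))"
  proof (rule sum.cong[OF refl])
    fix v assume "v \<in> ?W"
    then have "packed v" by (simp add: words_with_last_occ_def)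
    moreover have "rank_bound j E v = card (set v) + (if j \<in> P then 1 else 0)"
      using j by (auto simp: rank_bound_def E_def)
    moreover have "E \<subseteq> {..<j}" by (auto simp: E_def)
    ultimately show "Sprod q J v * (\<Sum>u\<in>sorted_prefix_fiber j v E. q ^ sum_list (prefix_ranks j u))
        = Sprod q J v * sorted_lists_weight q j (card (set v) + (if j \<in> P then 1 else 0))"
      using sum_sorted_prefix_fiber[of v E j q] j by simp
  qed
  finally show ?thesis .
qed

lemma CIJ_Cons_merge:
  assumes pos: "\<forall>x\<in>set (a # b # I). 0 < x" and n: "sum_list (a # b # I) = n"
    and "a < j" "j \<le> n"
  shows "CIJ q (a # b # I) (j # J) = CIJ q ((a + b) # I) (j # J)"
proof -
  let ?P = "set (partial_sums (a # b # I))" and ?Q = "set (partial_sums ((a + b) # I))"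
  have "?P = insert a ?Q" by (rule set_partial_sums_merge)
  then have "descents_after j ?P = descents_after j ?Q" "j \<in> ?P \<longleftrightarrow> j \<in> ?Q"
    using \<open>a < j\<close> by (auto simp: descents_after_def)
  moreover have "\<forall>x\<in>set ((a + b) # I). 0 < x" "sum_list ((a + b) # I) = n" using pos n by auto
  moreover have "0 < j" using \<open>a < j\<close> by simp
  ultimately show ?thesis
    unfolding CIJ_Cons[OF pos n \<open>0 < j\<close> \<open>j \<le> n\<close>] by (simp only: CIJ_Cons[OF _ _ \<open>0 < j\<close> \<open>j \<le> n\<close>])
qed

lemma partial_sums_remove_cells:
  assumes pos: "\<forall>x\<in>set (i # I). 0 < x" and j: "0 < j" "j \<le> i"
  shows "set (partial_sums (remove_cells j (i # I))) = descents_after j (set (partial_sums (i # I)))"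
    and "sum_list (remove_cells j (i # I)) = sum_list (i # I) - j"
    and "\<forall>x\<in>set (remove_cells j (i # I)). 0 < x"
proof -
  have pos_I: "\<forall>y\<in>set (partial_sums I). 0 < y" using partial_sums_pos[of I] pos by simp
  have after: "descents_after j (set (partial_sums (i # I)))
      = (if j < i then {i - j} else {}) \<union> (\<lambda>y. i - j + y) ` set (partial_sums I)"
  proof -
    have "{x \<in> set (partial_sums (i # I)). j < x}
        = (if j < i then {i} else {}) \<union> (+) i ` set (partial_sums I)"
      using pos_I j by auto
    moreover have "(\<lambda>x. x - j) ` (+) i ` S = (\<lambda>y. i - j + y) ` S" for S
      using j by (auto simp: image_image intro: image_cong)
    ultimately show ?thesis by (simp add: descents_after_def image_Un)
  qed
  obtain m where "j = Suc m" using j(1) by (cases j) auto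
  then have rc: "remove_cells j (i # I) = (if j < i then (i - j) # I else I)"
    using j by auto
  show "set (partial_sums (remove_cells j (i # I))) = descents_after j (set (partial_sums (i # I)))"
    unfolding rc after by (auto simp: image_image)
  show "sum_list (remove_cells j (i # I)) = sum_list (i # I) - j"
    unfolding rc using j by auto
  show "\<forall>x\<in>set (remove_cells j (i # I)). 0 < x"
    unfolding rc using pos by auto
qed

lemma card_descents_after:
  assumes "\<forall>x\<in>set (i # I). 0 < x" "j \<le> i"
  defines "P \<equiv> set (partial_sums (i # I))"
  shows "card (descents_after j P) + (if j \<in> P then 1 else 0) = length (i # I)"
proof -
  have "x \<ge> i" if "x \<in> P" for x using that by (auto simp: P_def)
  then have "x = j" if "x \<in> P" "\<not> j < x" for x
    using that assms(2) by force
  then have low: "{x \<in> P. \<not> j < x} = (if j \<in> P then {j} else {})"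
    by auto
  have "inj_on (\<lambda>x. x - j) {x \<in> P. j < x}" by (auto simp: inj_on_def)
  then have "card (descents_after j P) = card {x \<in> P. j < x}"
    by (simp add: descents_after_def card_image)
  moreover have "card P = card {x \<in> P. j < x} + card {x \<in> P. \<not> j < x}"
    by (subst card_Un_disjoint[symmetric]) (auto simp: P_def intro: arg_cong[where f = card])
  moreover have "card P = length (i # I)"
    using card_set_partial_sums[OF assms(1)] by (simp add: P_def)
  ultimately show ?thesis
    using low by (cases "j \<in> P") simp_all
qed

lemma CIJ_Cons_remove_cells:
  assumes pos: "\<forall>x\<in>set (i # I). 0 < x" and n: "sum_list (i # I) = n" and j: "0 < j" "j \<le> i"
  shows "CIJ q (i # I) (j # J) = qbinom q (length (i # I) + j - 1) j * CIJ q (remove_cells j (i # I)) J"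
proof -
  let ?P = "set (partial_sums (i # I))"
  let ?W = "words_with_last_occ (n - j) (descents_after j ?P)"
  have "j \<le> n" using n j by auto
  have "card (set v) + (if j \<in> ?P then 1 else 0) = length (i # I)" if "v \<in> ?W" for v
  proof -
    have "card (set v) = card (last_occ v)"
      by (simp add: last_occ_eq_Suc_last_positions card_image card_last_positions)
    then show ?thesis
      using that card_descents_after[OF pos j(2)] by (simp add: words_with_last_occ_def)
  qed
  then have "CIJ q (i # I) (j # J) = (\<Sum>v\<in>?W. Sprod q J v * sorted_lists_weight q j (length (i # I)))"
    unfolding CIJ_Cons[OF pos n j(1) \<open>j \<le> n\<close>] by (intro sum.cong) auto
  also have "\<dots> = sorted_lists_weight q j (length (i # I)) * (\<Sum>v\<in>?W. Sprod q J v)"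
    by (simp add: sum_distrib_left mult.commute)
  also have "(\<Sum>v\<in>?W. Sprod q J v) = CIJ q (remove_cells j (i # I)) J"
    using CIJ_eq_sum[OF partial_sums_remove_cells(3)[OF pos j], of q J]
      partial_sums_remove_cells(1,2)[OF pos j] n
    by simp
  also have "sorted_lists_weight q j (length (i # I)) = qbinom q (length (i # I) + j - 1) j"
    using sorted_lists_weight_eq_qbinom[of q j "length I"] by simp
  finally show ?thesis .
qed

theorem mainTheorem5:
  fixes q :: "'a::field" and n :: nat and I J :: "nat list"
  assumes "q \<noteq> 0" and "0 < n"
    and "I \<in> compositions n" and "J \<in> compositions n"
  shows "(I ! 0 < J ! 0 \<longrightarrow>
            CIJ q I J = CIJ q ((I ! 0 + I ! 1) # drop 2 I) J)
       \<and> (\<not> I ! 0 < J ! 0 \<longrightarrow>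
            CIJ q I J = qbinom q (length I + J ! 0 - 1) (J ! 0)
                        * CIJ q (remove_cells (J ! 0) I) (tl J))"
proof -
  have pos_I: "\<forall>x\<in>set I. 0 < x" and n_I: "sum_list I = n"
    and pos_J: "\<forall>x\<in>set J. 0 < x" and n_J: "sum_list J = n"
    using assms(3,4) by (auto simp: compositions_def)
  obtain j J' where J: "J = j # J'" using n_J assms(2) by (cases J) auto
  obtain i I' where I: "I = i # I'" using n_I assms(2) by (cases I) auto
  have "0 < j" "j \<le> n" using pos_J n_J J by auto
  show ?thesis
  proof (intro conjI impI)
    assume "I ! 0 < J ! 0"
    then have "i < j" using I J by simp
    then obtain i' I'' where "I' = i' # I''" using n_I I \<open>j \<le> n\<close> by (cases I') auto
    then show "CIJ q I J = CIJ q ((I ! 0 + I ! 1) # drop 2 I) J"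
      using CIJ_Cons_merge[of i i' I'' n j q J'] pos_I n_I I J \<open>i < j\<close> \<open>j \<le> n\<close> by simp
  next
    assume "\<not> I ! 0 < J ! 0"
    then show "CIJ q I J = qbinom q (length I + J ! 0 - 1) (J ! 0) * CIJ q (remove_cells (J ! 0) I) (tl J)"
      using CIJ_Cons_remove_cells[of i I' n j q J'] pos_I n_I I J \<open>0 < j\<close> by simp
  qed
qed

end
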